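(* Let $G$ be a finite simple graph on the vertex set $V(G)=\{x_{11},\ldots,x_{n1}\}$. Let $m_1,\ldots,m_n\geq 2$ be integers and let $G_1,\ldots,G_n$ be connected finite simple graphs on the vertex sets $V(G_i)=\{x_{i1},\ldots,x_{im_i}\}$, where the sets $V(G_i)\setminus\{x_{i1}\}$ are pairwise disjoint and disjoint from $V(G)$. Let $G(G_1,\ldots,G_n)$ denote the graph obtained by attaching $G_i$ to $G$ at the vertex $x_{i1}$ for every $i$. Then: (i) If $G_1,\ldots,G_n$ are vertex decomposable and, for each $i$, $x_{i1}$ is a shedding vertex of $G_i$, then $G(G_1,\ldots,G_n)$ is vertex decomposable. (ii) Conversely, if $G(G_1,\ldots,G_n)$ is vertex decomposable, then $G_1,\ldots,G_n$ are vertex decomposable.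
   Context: The graph $G(G_1,\ldots,G_n)$ has vertex set $\bigcup_{i=1}^n V(G_i)$ and edge set $E(G)\cup\bigcup_{i=1}^n E(G_i)$, i.e. the vertex $x_{i1}$ of $G$ is identified with the vertex $x_{i1}$ of $G_i$. For a graph $H$ and $W\subseteq V(H)$, $H\setminus W$ is the induced subgraph on $V(H)\setminus W$; $N_H(x)$ is the set of neighbors of $x$ and $N_H[x]=N_H(x)\cup\{x\}$. A graph $H$ is vertex decomposable if it has no edges, or else it has a vertex $x$ (called a shedding vertex) such that (1) both $H\setminus N_H[x]$ and $H\setminus\{x\}$ are vertex decomposable, and (2) for every independent set $S$ of $H\setminus N_H[x]$ there is $y\in N_H(x)$ such that $S\cup\{y\}$ is independent in $H\setminus\{x\}$. (Equivalently, the independence complex of $H$ is vertex decomposable in the sense of Björner–Wachs.) Note that by this definition a shedding vertex must satisfy both conditions (1) and (2). *)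

theory Defs
  imports Main
begin

type_synonym 'a graph = "'a set \<times> 'a set set"

definition verts :: "'a graph \<Rightarrow> 'a set" where "verts H = fst H"
definition edges :: "'a graph \<Rightarrow> 'a set set" where "edges H = snd H"

definition simple_graph :: "'a graph \<Rightarrow> bool" where
  "simple_graph H \<longleftrightarrow> finite (verts H) \<and> (\<forall>e\<in>edges H. e \<subseteq> verts H \<and> card e = 2)"

definition adj :: "'a graph \<Rightarrow> 'a \<Rightarrow> 'a \<Rightarrow> bool" where
  "adj H u v \<longleftrightarrow> {u, v} \<in> edges H"

definition connected_graph :: "'a graph \<Rightarrow> bool" where
  "connected_graph H \<longleftrightarrow> verts H \<noteq> {} \<and> (\<forall>u\<in>verts H. \<forall>v\<in>verts H. (adj H)\<^sup>*\<^sup>* u v)"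

definition del_verts :: "'a graph \<Rightarrow> 'a set \<Rightarrow> 'a graph" where
  "del_verts H W = (verts H - W, {e \<in> edges H. e \<subseteq> verts H - W})"

definition nbhd :: "'a graph \<Rightarrow> 'a \<Rightarrow> 'a set" where
  "nbhd H x = {y \<in> verts H. {x, y} \<in> edges H}"

definition closed_nbhd :: "'a graph \<Rightarrow> 'a \<Rightarrow> 'a set" where
  "closed_nbhd H x = insert x (nbhd H x)"

definition independent :: "'a graph \<Rightarrow> 'a set \<Rightarrow> bool" where
  "independent H S \<longleftrightarrow> S \<subseteq> verts H \<and> (\<forall>e\<in>edges H. \<not> e \<subseteq> S)"

definition shedding_cond :: "'a graph \<Rightarrow> 'a \<Rightarrow> bool" where
  "shedding_cond H x \<longleftrightarrow>
     (\<forall>S. independent (del_verts H (closed_nbhd H x)) S \<longrightarrow>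
          (\<exists>y\<in>nbhd H x. independent (del_verts H {x}) (insert y S)))"

inductive vertex_decomposable :: "'a graph \<Rightarrow> bool" where
  no_edges: "edges H = {} \<Longrightarrow> vertex_decomposable H"
| shed: "x \<in> verts H \<Longrightarrow> vertex_decomposable (del_verts H (closed_nbhd H x)) \<Longrightarrow>
         vertex_decomposable (del_verts H {x}) \<Longrightarrow> shedding_cond H x \<Longrightarrow>
         vertex_decomposable H"

definition shedding_vertex :: "'a graph \<Rightarrow> 'a \<Rightarrow> bool" where
  "shedding_vertex H x \<longleftrightarrow> x \<in> verts H \<and>
     vertex_decomposable (del_verts H (closed_nbhd H x)) \<and>
     vertex_decomposable (del_verts H {x}) \<and> shedding_cond H x"

definition attach :: "'a graph \<Rightarrow> nat \<Rightarrow> (nat \<Rightarrow> 'a graph) \<Rightarrow> 'a graph" where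
  "attach G n Gs = (verts G \<union> (\<Union>i\<in>{1..n}. verts (Gs i)),
                    edges G \<union> (\<Union>i\<in>{1..n}. edges (Gs i)))"

end

theory Submission
  imports Defs
begin

(* Two facts about vertex decomposability drive the proof: the link H - N[v] of a vertex
   decomposable graph is vertex decomposable for every vertex v, and a disjoint union of vertex
   decomposable graphs is vertex decomposable, since a shedding vertex of one summand stays
   shedding in the union.

   (i) For a set A of indices let U_A be the union of the vertex sets of the G_k, k in A. By
   induction on |A|, the graph induced on U_A is vertex decomposable, with the root v = x_j1 of any
   block j in A as shedding vertex: deleting v leaves G_j - v beside U_(A-j), and deleting N[v]
   leaves G_j - N[v], the blocks whose root is not adjacent to v, and G_k - x_k1 for the blocks
   whose root is, with no edges between these pieces. The shedding condition is inherited from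
   G_j because the non-root vertices of G_j have all their neighbours in G_j.

   (ii) Choose for every k other than i a neighbour y_k of x_k1 in G_k. The y_k are independent,
   their closed neighbourhoods stay inside the G_k and contain the roots x_k1, so taking these
   links successively cuts G_i off from the rest of the graph; deleting the remaining components
   is again a sequence of links. *)

definition wf_graph :: "'a graph \<Rightarrow> bool" where
  "wf_graph H \<longleftrightarrow> (\<forall>e\<in>edges H. e \<subseteq> verts H \<and> card e = 2)"

lemma wf_graph_edgeE:
  assumes "wf_graph H" "e \<in> edges H"
  obtains a b where "e = {a, b}" "a \<noteq> b" "a \<in> verts H" "b \<in> verts H"
proof -
  have "e \<subseteq> verts H" "card e = 2" using assms unfolding wf_graph_def by blast+
  then show thesis using that by (auto simp: card_2_iff)
qed

lemma verts_del_verts [simp]: "verts (del_verts H W) = verts H - W"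
  by (simp add: del_verts_def verts_def)

lemma edges_del_verts [simp]: "edges (del_verts H W) = {e \<in> edges H. e \<subseteq> verts H - W}"
  by (simp add: del_verts_def edges_def verts_def)

lemma del_verts_del_verts: "del_verts (del_verts H A) B = del_verts H (A \<union> B)"
  by (auto simp: del_verts_def verts_def edges_def)

lemma del_verts_cong: "verts H - A = verts H - B \<Longrightarrow> del_verts H A = del_verts H B"
  by (simp add: del_verts_def)

lemma del_verts_empty: "wf_graph H \<Longrightarrow> del_verts H {} = H"
  by (rule prod_eqI) (auto simp: wf_graph_def del_verts_def verts_def edges_def)

lemma wf_graph_del_verts: "wf_graph H \<Longrightarrow> wf_graph (del_verts H W)"
  by (auto simp: wf_graph_def)

lemma independent_del_verts:
  "independent (del_verts H W) S \<longleftrightarrow> S \<subseteq> verts H - W \<and> (\<forall>e\<in>edges H. \<not> e \<subseteq> S)"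
  unfolding independent_def by auto

lemma closed_nbhd_subset: "x \<in> verts H \<Longrightarrow> closed_nbhd H x \<subseteq> verts H"
  by (auto simp: nbhd_def closed_nbhd_def)

lemma nbhd_del_verts: "x \<in> verts H - A \<Longrightarrow> nbhd (del_verts H A) x = nbhd H x - A"
  by (auto simp: nbhd_def)

lemma closed_nbhd_del_verts:
  "x \<in> verts H - A \<Longrightarrow> closed_nbhd (del_verts H A) x = closed_nbhd H x - A"
  by (auto simp: closed_nbhd_def nbhd_del_verts)

lemma mem_closed_nbhd_commute:
  "x \<in> verts H \<Longrightarrow> y \<in> verts H \<Longrightarrow> x \<in> closed_nbhd H y \<longleftrightarrow> y \<in> closed_nbhd H x"
  by (auto simp: closed_nbhd_def nbhd_def insert_commute)

lemma shedding_cond_del_closed_nbhd: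
  assumes wf: "wf_graph H" and sc: "shedding_cond H x" and x: "x \<in> verts H"
    and v: "v \<in> verts H" "v \<notin> closed_nbhd H x"
  shows "shedding_cond (del_verts H (closed_nbhd H v)) x"
  unfolding shedding_cond_def
proof (intro allI impI)
  let ?N = "closed_nbhd H"
  have xv: "x \<notin> ?N v" using mem_closed_nbhd_commute[OF x v(1)] v(2) by blast
  fix S assume "independent (del_verts (del_verts H (?N v)) (closed_nbhd (del_verts H (?N v)) x)) S"
  then have S: "S \<subseteq> verts H - (?N v \<union> ?N x)" "\<forall>e\<in>edges H. \<not> e \<subseteq> S"
    using x xv by (auto simp: independent_del_verts closed_nbhd_del_verts)
  have "independent (del_verts H (?N x)) (insert v S)"
    unfolding independent_del_verts
  proof (intro conjI ballI notI)
    show "insert v S \<subseteq> verts H - ?N x" using S(1) v by blast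
  next
    fix e assume e: "e \<in> edges H" "e \<subseteq> insert v S"
    obtain a b where ab: "e = {a, b}" "a \<noteq> b" "a \<in> verts H" "b \<in> verts H"
      using wf_graph_edgeE[OF wf e(1)] .
    have "\<not> {a, b} \<subseteq> S" using S(2) e(1) unfolding ab(1) by (rule bspec)
    then have "(a = v \<and> b \<in> S) \<or> (b = v \<and> a \<in> S)" using e(2) ab(2) unfolding ab(1) by auto
    moreover have "a \<in> ?N b" "b \<in> ?N a"
      using e(1) ab by (simp_all add: closed_nbhd_def nbhd_def insert_commute)
    ultimately show False using S(1) by blast
  qed
  then obtain y where y: "y \<in> nbhd H x" "independent (del_verts H {x}) (insert y (insert v S))"
    using sc unfolding shedding_cond_def by blast
  have "y \<notin> ?N v"
  proof
    assume "y \<in> ?N v"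
    moreover have "y \<noteq> v" using y(1) v(2) by (auto simp: closed_nbhd_def)
    ultimately have "{v, y} \<in> edges H" by (auto simp: closed_nbhd_def nbhd_def)
    then show False using y(2) by (auto simp: independent_del_verts)
  qed
  then show "\<exists>y\<in>nbhd (del_verts H (?N v)) x. independent (del_verts (del_verts H (?N v)) {x}) (insert y S)"
    using x xv y S(1) by (intro bexI[of _ y]) (auto simp: nbhd_del_verts independent_del_verts)
qed

lemma vertex_decomposable_del_closed_nbhd:
  assumes "vertex_decomposable H" "wf_graph H" "v \<in> verts H"
  shows "vertex_decomposable (del_verts H (closed_nbhd H v))"
  using assms
proof (induction arbitrary: v rule: vertex_decomposable.induct)
  case (no_edges H)
  then show ?case by (intro vertex_decomposable.no_edges) simp
next
  case (shed x H)
  let ?N = "closed_nbhd H"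
  have wf: "wf_graph (del_verts H W)" for W by (rule wf_graph_del_verts[OF shed.prems(1)])
  consider "v = x" | "v \<in> nbhd H x" | "v \<notin> ?N x"
    by (auto simp: closed_nbhd_def)
  then show ?case
  proof cases
    case 1
    then show ?thesis using shed.hyps(2) by simp
  next
    case 2
    then have "{x, v} \<in> edges H" "v \<noteq> x"
      using shed.prems(1) by (auto simp: nbhd_def wf_graph_def)
    then have "x \<in> ?N v" using shed.hyps(1) by (simp add: closed_nbhd_def nbhd_def insert_commute)
    then have "del_verts H (?N v) = del_verts (del_verts H {x}) (closed_nbhd (del_verts H {x}) v)"
      using \<open>v \<noteq> x\<close> shed.prems(2)
      by (simp add: del_verts_del_verts closed_nbhd_del_verts insert_absorb)
    also have "vertex_decomposable \<dots>"
      using shed.IH(2)[OF wf] shed.prems(2) \<open>v \<noteq> x\<close> by simp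
    finally show ?thesis .
  next
    case 3
    define L where "L = del_verts H (?N v)"
    have "x \<notin> ?N v" using 3 mem_closed_nbhd_commute[OF shed.hyps(1) shed.prems(2)] by blast
    then have xL: "x \<in> verts L" using shed.hyps(1) by (simp add: L_def)
    have "del_verts L (closed_nbhd L x)
        = del_verts (del_verts H (?N x)) (closed_nbhd (del_verts H (?N x)) v)"
      using \<open>x \<notin> ?N v\<close> 3 shed.hyps(1) shed.prems(2) unfolding L_def
      by (simp add: del_verts_del_verts closed_nbhd_del_verts) (rule del_verts_cong, auto)
    then have link: "vertex_decomposable (del_verts L (closed_nbhd L x))"
      using shed.IH(1)[OF wf] 3 shed.prems(2) by simp
    have "v \<noteq> x" using 3 by (simp add: closed_nbhd_def)
    then have "del_verts L {x} = del_verts (del_verts H {x}) (closed_nbhd (del_verts H {x}) v)"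
      using shed.prems(2) unfolding L_def
      by (simp add: del_verts_del_verts closed_nbhd_del_verts Un_commute)
    then have deletion: "vertex_decomposable (del_verts L {x})"
      using shed.IH(2)[OF wf] \<open>v \<noteq> x\<close> shed.prems(2) by simp
    have "shedding_cond L x"
      unfolding L_def by (rule shedding_cond_del_closed_nbhd[OF shed.prems(1) shed.hyps(4,1) shed.prems(2) 3])
    then show ?thesis using vertex_decomposable.shed[OF xL link deletion] by (simp add: L_def)
  qed
qed

lemma vertex_decomposable_del_closed_nbhds:
  assumes wf: "wf_graph H" and vd: "vertex_decomposable H"
    and "finite S" "independent H S"
  shows "vertex_decomposable (del_verts H (\<Union>s\<in>S. closed_nbhd H s))"
  using assms(3,4)
proof (induction S rule: finite_induct)
  case empty
  then show ?case using vd wf by (simp add: del_verts_empty)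
next
  case (insert s S)
  let ?W = "\<Union>t\<in>S. closed_nbhd H t"
  have "independent H S" using insert.prems by (auto simp: independent_def)
  then have IH: "vertex_decomposable (del_verts H ?W)" by (rule insert.IH)
  have s: "s \<in> verts H - ?W"
  proof
    show "s \<in> verts H" using insert.prems by (simp add: independent_def)
    show "s \<notin> ?W"
    proof
      assume "s \<in> ?W"
      then obtain t where "t \<in> S" "s \<in> nbhd H t" using insert.hyps(2) by (auto simp: closed_nbhd_def)
      then have "{t, s} \<in> edges H" "{t, s} \<subseteq> insert s S" by (auto simp: nbhd_def)
      then show False using insert.prems by (auto simp: independent_def)
    qed
  qed
  have "del_verts (del_verts H ?W) (closed_nbhd (del_verts H ?W) s)
      = del_verts H (\<Union>t\<in>insert s S. closed_nbhd H t)"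
    using s by (simp add: del_verts_del_verts closed_nbhd_del_verts) (rule del_verts_cong, auto)
  moreover have "vertex_decomposable (del_verts (del_verts H ?W) (closed_nbhd (del_verts H ?W) s))"
    using vertex_decomposable_del_closed_nbhd[OF IH wf_graph_del_verts[OF wf]] s by simp
  ultimately show ?case by simp
qed

definition induced :: "'a graph \<Rightarrow> 'a set \<Rightarrow> 'a graph" where
  "induced H U = del_verts H (verts H - U)"

lemma verts_induced: "U \<subseteq> verts H \<Longrightarrow> verts (induced H U) = U"
  unfolding induced_def by auto

lemma edges_induced: "U \<subseteq> verts H \<Longrightarrow> edges (induced H U) = {e \<in> edges H. e \<subseteq> U}"
  unfolding induced_def by auto

lemma wf_graph_induced: "wf_graph H \<Longrightarrow> wf_graph (induced H U)"
  unfolding induced_def by (rule wf_graph_del_verts)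

lemma del_verts_induced: "del_verts (induced H U) W = induced H (U - W)"
  unfolding induced_def del_verts_del_verts by (rule del_verts_cong) auto

lemma induced_induced: "V \<subseteq> U \<Longrightarrow> induced (induced H U) V = induced H V"
  unfolding induced_def del_verts_del_verts by (rule del_verts_cong) auto

lemma induced_verts: "wf_graph H \<Longrightarrow> induced H (verts H) = H"
  unfolding induced_def by (simp add: del_verts_empty)

lemma independent_induced:
  "U \<subseteq> verts H \<Longrightarrow> independent (induced H U) S \<longleftrightarrow> S \<subseteq> U \<and> (\<forall>e\<in>edges H. \<not> e \<subseteq> S)"
  unfolding induced_def independent_del_verts by auto

lemma nbhd_induced: "U \<subseteq> verts H \<Longrightarrow> v \<in> U \<Longrightarrow> nbhd (induced H U) v = nbhd H v \<inter> U"
  unfolding induced_def by (subst nbhd_del_verts) (auto simp: nbhd_def)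

lemma closed_nbhd_induced:
  "U \<subseteq> verts H \<Longrightarrow> v \<in> U \<Longrightarrow> closed_nbhd (induced H U) v = closed_nbhd H v \<inter> U"
  unfolding closed_nbhd_def by (auto simp: nbhd_induced)

lemma vertex_decomposable_induced_empty: "wf_graph H \<Longrightarrow> vertex_decomposable (induced H {})"
  by (rule vertex_decomposable.no_edges) (auto simp: induced_def wf_graph_def)

lemma shedding_cond_induced:
  assumes wf: "wf_graph H" and X: "X \<subseteq> verts H" "x \<in> X"
    and X_private: "\<forall>e\<in>edges H. e \<inter> (X - {x}) \<noteq> {} \<longrightarrow> e \<subseteq> X"
    and sc: "shedding_cond (induced H X) x"
  shows "shedding_cond H x"
  unfolding shedding_cond_def
proof (intro allI impI)
  fix S assume "independent (del_verts H (closed_nbhd H x)) S"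
  then have S: "S \<subseteq> verts H - closed_nbhd H x" "\<forall>e\<in>edges H. \<not> e \<subseteq> S"
    by (simp_all add: independent_del_verts)
  have "independent (del_verts (induced H X) (closed_nbhd (induced H X) x)) (S \<inter> X)"
    unfolding del_verts_induced closed_nbhd_induced[OF X]
    by (subst independent_induced) (use S X in auto)
  then obtain y where y: "y \<in> nbhd (induced H X) x"
      "independent (del_verts (induced H X) {x}) (insert y (S \<inter> X))"
    using sc unfolding shedding_cond_def by blast
  have y2: "insert y (S \<inter> X) \<subseteq> X - {x}" "\<forall>e\<in>edges H. \<not> e \<subseteq> insert y (S \<inter> X)"
    using y(2) unfolding del_verts_induced independent_induced[OF subset_trans[OF Diff_subset X(1)]]
    by simp_all
  then have yX: "y \<in> X - {x}" by blast
  have "independent (del_verts H {x}) (insert y S)"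
    unfolding independent_del_verts
  proof (intro conjI ballI notI)
    show "insert y S \<subseteq> verts H - {x}" using yX X S(1) by (auto simp: closed_nbhd_def)
  next
    fix e assume e: "e \<in> edges H" "e \<subseteq> insert y S"
    show False
    proof (cases "y \<in> e")
      case True
      then have "e \<subseteq> X" using X_private e(1) yX by blast
      then show False using y2(2) e by blast
    next
      case False
      then show False using S(2) e by blast
    qed
  qed
  moreover have "y \<in> nbhd H x" using y(1) X by (simp add: nbhd_induced)
  ultimately show "\<exists>y\<in>nbhd H x. independent (del_verts H {x}) (insert y S)" by blast
qed


definition gunion :: "'a graph \<Rightarrow> 'a graph \<Rightarrow> 'a graph" where
  "gunion A B = (verts A \<union> verts B, edges A \<union> edges B)"

lemma verts_gunion [simp]: "verts (gunion A B) = verts A \<union> verts B"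
  by (simp add: gunion_def verts_def)

lemma edges_gunion [simp]: "edges (gunion A B) = edges A \<union> edges B"
  by (simp add: gunion_def edges_def)

lemma gunion_commute: "gunion A B = gunion B A"
  by (simp add: gunion_def Un_commute)

lemma wf_graph_gunion: "wf_graph A \<Longrightarrow> wf_graph B \<Longrightarrow> wf_graph (gunion A B)"
  unfolding wf_graph_def edges_gunion verts_gunion by blast

lemma del_verts_gunion_left:
  "wf_graph A \<Longrightarrow> wf_graph B \<Longrightarrow> W \<inter> verts B = {} \<Longrightarrow>
   del_verts (gunion A B) W = gunion (del_verts A W) B"
  unfolding gunion_def del_verts_def wf_graph_def verts_def edges_def
  by (simp add: prod_eq_iff) blast

lemma induced_gunion_left:
  assumes "wf_graph A" "wf_graph B" "verts A \<inter> verts B = {}"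
  shows "induced (gunion A B) (verts A) = A"
proof -
  have "e \<notin> edges B" if "e \<subseteq> verts A" for e
  proof
    assume "e \<in> edges B"
    then have "e \<subseteq> verts B" "card e = 2" using assms(2) by (auto simp: wf_graph_def)
    then show False using that assms(3) by (metis card.empty inf.bounded_iff subset_empty zero_neq_numeral)
  qed
  then have "edges (induced (gunion A B) (verts A)) = edges A"
    using assms(1) by (auto simp: edges_induced wf_graph_def)
  moreover have "verts (induced (gunion A B) (verts A)) = verts A" by (simp add: verts_induced)
  ultimately show ?thesis by (simp add: verts_def edges_def prod_eq_iff)
qed

lemma closed_nbhd_gunion_left:
  assumes "wf_graph A" "wf_graph B" "verts A \<inter> verts B = {}" "x \<in> verts A"
  shows "closed_nbhd (gunion A B) x = closed_nbhd A x"
proof -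
  have "{x, y} \<notin> edges B" for y
    using assms(2-4) unfolding wf_graph_def by blast
  moreover have "y \<in> verts A" if "{x, y} \<in> edges A" for y
    using assms(1) that unfolding wf_graph_def by blast
  ultimately show ?thesis by (auto simp: closed_nbhd_def nbhd_def)
qed

lemma vertex_decomposable_gunion_shed:
  assumes wf: "wf_graph A" "wf_graph B" and disj: "verts A \<inter> verts B = {}"
    and x: "x \<in> verts A" and sc: "shedding_cond A x"
    and link: "vertex_decomposable (gunion (del_verts A (closed_nbhd A x)) B)"
    and deletion: "vertex_decomposable (gunion (del_verts A {x}) B)"
  shows "vertex_decomposable (gunion A B)"
proof (rule vertex_decomposable.shed[of x])
  show "x \<in> verts (gunion A B)" using x by simp
  have "closed_nbhd A x \<inter> verts B = {}" using closed_nbhd_subset[OF x] disj by blast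
  then show "vertex_decomposable (del_verts (gunion A B) (closed_nbhd (gunion A B) x))"
    using link by (simp add: closed_nbhd_gunion_left[OF wf disj x] del_verts_gunion_left[OF wf])
  have "{x} \<inter> verts B = {}" using x disj by blast
  then show "vertex_decomposable (del_verts (gunion A B) {x})"
    using deletion by (simp add: del_verts_gunion_left[OF wf])
  have "\<forall>e\<in>edges (gunion A B). e \<inter> (verts A - {x}) \<noteq> {} \<longrightarrow> e \<subseteq> verts A"
    using wf disj unfolding wf_graph_def edges_gunion by blast
  then show "shedding_cond (gunion A B) x"
    using shedding_cond_induced[OF wf_graph_gunion[OF wf], of "verts A" x] sc x
    by (simp add: induced_gunion_left[OF wf disj])
qed

lemma vertex_decomposable_gunion:
  assumes "vertex_decomposable A" "vertex_decomposable B"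
    and "wf_graph A" "wf_graph B" "verts A \<inter> verts B = {}"
  shows "vertex_decomposable (gunion A B)"
  using assms
proof (induction A rule: vertex_decomposable.induct)
  case (no_edges A)
  from no_edges.prems show ?case
  proof (induction B rule: vertex_decomposable.induct)
    case (no_edges B)
    then show ?case using \<open>edges A = {}\<close> by (intro vertex_decomposable.no_edges) simp
  next
    case (shed x B)
    have wf: "wf_graph A" "wf_graph (del_verts B W)" for W
      using shed.prems(1,2) wf_graph_del_verts by blast+
    have disj: "verts A \<inter> verts (del_verts B W) = {}" for W
      using shed.prems(3) by auto
    have "vertex_decomposable (gunion B A)"
    proof (rule vertex_decomposable_gunion_shed[OF shed.prems(2,1) _ shed.hyps(1,4)])
      show "verts B \<inter> verts A = {}" using shed.prems(3) by blast
      show "vertex_decomposable (gunion (del_verts B (closed_nbhd B x)) A)"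
        using shed.IH(1)[OF wf disj] by (simp add: gunion_commute)
      show "vertex_decomposable (gunion (del_verts B {x}) A)"
        using shed.IH(2)[OF wf disj] by (simp add: gunion_commute)
    qed
    then show ?case by (simp add: gunion_commute)
  qed
next
  case (shed x A)
  have wf: "wf_graph (del_verts A W)" and disj: "verts (del_verts A W) \<inter> verts B = {}" for W
    using shed.prems(2,4) by (auto simp: wf_graph_del_verts)
  show ?case
    by (rule vertex_decomposable_gunion_shed[OF shed.prems(2,3,4) shed.hyps(1,4)
          shed.IH(1)[OF shed.prems(1) wf shed.prems(3) disj] shed.IH(2)[OF shed.prems(1) wf shed.prems(3) disj]])
qed

definition separated :: "'a graph \<Rightarrow> 'a set \<Rightarrow> 'a set \<Rightarrow> bool" where
  "separated H X Y \<longleftrightarrow> X \<inter> Y = {} \<and> (\<forall>e\<in>edges H. e \<inter> X = {} \<or> e \<inter> Y = {})"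

lemma separated_commute: "separated H X Y \<longleftrightarrow> separated H Y X"
  unfolding separated_def by blast

lemma separated_mono:
  "separated H X Y \<Longrightarrow> X' \<subseteq> X \<Longrightarrow> Y' \<subseteq> Y \<Longrightarrow> edges H' \<subseteq> edges H \<Longrightarrow> separated H' X' Y'"
  unfolding separated_def by blast

lemma separated_UN_left: "(\<And>i. i \<in> I \<Longrightarrow> separated H (F i) Y) \<Longrightarrow> separated H (\<Union>i\<in>I. F i) Y"
  unfolding separated_def by blast

lemma separated_UN_right: "(\<And>i. i \<in> I \<Longrightarrow> separated H X (F i)) \<Longrightarrow> separated H X (\<Union>i\<in>I. F i)"
  unfolding separated_def by blast

lemma induced_Un_separated:
  assumes "X \<subseteq> verts H" "Y \<subseteq> verts H" "separated H X Y"
  shows "induced H (X \<union> Y) = gunion (induced H X) (induced H Y)"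
proof -
  have "{e \<in> edges H. e \<subseteq> X \<union> Y} = {e \<in> edges H. e \<subseteq> X} \<union> {e \<in> edges H. e \<subseteq> Y}"
    using \<open>separated H X Y\<close> unfolding separated_def by blast
  then have "edges (induced H (X \<union> Y)) = edges (gunion (induced H X) (induced H Y))"
    using assms(1,2) by (simp add: edges_induced)
  moreover have "verts (induced H (X \<union> Y)) = verts (gunion (induced H X) (induced H Y))"
    using assms(1,2) by (simp add: verts_induced)
  ultimately show ?thesis by (simp add: verts_def edges_def prod_eq_iff)
qed

lemma vertex_decomposable_induced_Un:
  assumes wf: "wf_graph H" and "X \<subseteq> verts H" "Y \<subseteq> verts H" "separated H X Y"
    and "vertex_decomposable (induced H X)" "vertex_decomposable (induced H Y)"
  shows "vertex_decomposable (induced H (X \<union> Y))"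
  using assms unfolding induced_Un_separated[OF assms(2-4)]
  by (intro vertex_decomposable_gunion) (auto simp: wf_graph_induced verts_induced separated_def)

lemma vertex_decomposable_induced_UN:
  assumes "finite I" and wf: "wf_graph H" and "\<forall>i\<in>I. F i \<subseteq> verts H"
    and "\<forall>i\<in>I. vertex_decomposable (induced H (F i))"
    and "\<forall>i\<in>I. \<forall>j\<in>I. i \<noteq> j \<longrightarrow> separated H (F i) (F j)"
  shows "vertex_decomposable (induced H (\<Union>i\<in>I. F i))"
  using assms(1,3-)
proof (induction I rule: finite_induct)
  case empty
  then show ?case using vertex_decomposable_induced_empty[OF wf] by simp
next
  case (insert i I)
  have "separated H (F i) (\<Union>j\<in>I. F j)"
    using insert.hyps(2) insert.prems(3) by (intro separated_UN_right) auto
  then have "vertex_decomposable (induced H (F i \<union> (\<Union>j\<in>I. F j)))"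
    using insert by (intro vertex_decomposable_induced_Un[OF wf]) auto
  then show ?case by simp
qed

lemma vertex_decomposable_induced_component:
  assumes "wf_graph H" "finite (verts H)" "vertex_decomposable H"
    and "X \<subseteq> verts H" "separated H X (verts H - X)"
  shows "vertex_decomposable (induced H X)"
  using assms
proof (induction "card (verts H - X)" arbitrary: H rule: less_induct)
  case less
  show ?case
  proof (cases "verts H - X = {}")
    case True
    then show ?thesis using less.prems by (metis Diff_eq_empty_iff induced_verts subset_antisym)
  next
    case False
    then obtain r where r: "r \<in> verts H - X" by blast
    define L where "L = del_verts H (closed_nbhd H r)"
    have "closed_nbhd H r \<subseteq> verts H - X"
      using r less.prems(5) by (auto simp: closed_nbhd_def nbhd_def separated_def)
    then have X_L: "X \<subseteq> verts L" and "verts L - X \<subset> verts H - X"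
      using less.prems(4) r by (auto simp: L_def closed_nbhd_def)
    then have "card (verts L - X) < card (verts H - X)"
      using less.prems(2) by (intro psubset_card_mono) auto
    moreover have "separated L X (verts L - X)"
      using less.prems(5) by (rule separated_mono) (auto simp: L_def)
    moreover have "vertex_decomposable L"
      unfolding L_def using less.prems(3,1) r by (intro vertex_decomposable_del_closed_nbhd) auto
    ultimately have "vertex_decomposable (induced L X)"
      using less.hyps less.prems(1,2) X_L by (auto simp: L_def wf_graph_del_verts)
    moreover have "induced L X = induced H X"
      unfolding L_def induced_def del_verts_del_verts using X_L
      by (intro del_verts_cong) (auto simp: L_def)
    ultimately show ?thesis by simp
  qed
qed

lemma vertex_decomposable_induced_shed:
  assumes "U \<subseteq> verts H" "v \<in> U"
    and "vertex_decomposable (induced H (U - closed_nbhd H v))"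
    and "vertex_decomposable (induced H (U - {v}))"
    and "shedding_cond (induced H U) v"
  shows "vertex_decomposable (induced H U)"
proof (rule vertex_decomposable.shed[of v])
  show "v \<in> verts (induced H U)" using assms(1,2) by (simp add: verts_induced)
  have "U - closed_nbhd H v \<inter> U = U - closed_nbhd H v" by blast
  then show "vertex_decomposable (del_verts (induced H U) (closed_nbhd (induced H U) v))"
    using assms(3) by (simp add: closed_nbhd_induced[OF assms(1,2)] del_verts_induced)
  show "vertex_decomposable (del_verts (induced H U) {v})"
    using assms(4) by (simp add: del_verts_induced)
qed fact

locale attachment =
  fixes G :: "'a graph" and Gs :: "nat \<Rightarrow> 'a graph"
    and n :: nat and m :: "nat \<Rightarrow> nat" and x :: "nat \<Rightarrow> nat \<Rightarrow> 'a"
  assumes G_simple: "simple_graph G"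
    and G_verts: "verts G = (\<lambda>i. x i 1) ` {1..n}"
    and G_verts_distinct: "inj_on (\<lambda>i. x i 1) {1..n}"
    and m_ge: "\<forall>i\<in>{1..n}. m i \<ge> 2"
    and Gi_simple: "\<forall>i\<in>{1..n}. simple_graph (Gs i)"
    and Gi_conn: "\<forall>i\<in>{1..n}. connected_graph (Gs i)"
    and Gi_verts: "\<forall>i\<in>{1..n}. verts (Gs i) = x i ` {1..m i}"
    and Gi_verts_distinct: "\<forall>i\<in>{1..n}. inj_on (x i) {1..m i}"
    and Gi_disj: "\<forall>i\<in>{1..n}. \<forall>j\<in>{1..n}. i \<noteq> j \<longrightarrow>
                    (verts (Gs i) - {x i 1}) \<inter> (verts (Gs j) - {x j 1}) = {}"
    and Gi_disj_G: "\<forall>i\<in>{1..n}. (verts (Gs i) - {x i 1}) \<inter> verts G = {}"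
begin

abbreviation H :: "'a graph" where
  "H \<equiv> attach G n Gs"

definition blocks :: "nat set \<Rightarrow> 'a set" where
  "blocks A = (\<Union>k\<in>A. verts (Gs k))"

lemma verts_H: "verts H = verts G \<union> (\<Union>i\<in>{1..n}. verts (Gs i))"
  by (simp add: attach_def verts_def)

lemma edges_H: "edges H = edges G \<union> (\<Union>i\<in>{1..n}. edges (Gs i))"
  by (simp add: attach_def edges_def)

lemma wf_graph_G: "wf_graph G" and wf_graph_Gs: "i \<in> {1..n} \<Longrightarrow> wf_graph (Gs i)"
  using G_simple Gi_simple by (auto simp: simple_graph_def wf_graph_def)

lemma wf_graph_H: "wf_graph H"
  using wf_graph_G wf_graph_Gs unfolding wf_graph_def verts_H edges_H by blast

lemma finite_verts_H: "finite (verts H)"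
  using G_simple Gi_simple by (auto simp: verts_H simple_graph_def)

lemma root_in_block: "i \<in> {1..n} \<Longrightarrow> x i 1 \<in> verts (Gs i)"
  using Gi_verts m_ge by force

lemma verts_H_eq_blocks: "verts H = blocks {1..n}"
  using root_in_block unfolding verts_H G_verts blocks_def by blast

lemma blocks_disjoint:
  assumes "i \<in> {1..n}" "j \<in> {1..n}" "i \<noteq> j"
  shows "verts (Gs i) \<inter> verts (Gs j) = {}"
proof -
  have "x i 1 \<noteq> x j 1" using G_verts_distinct assms by (auto dest: inj_onD)
  moreover have "x i 1 \<in> verts G" "x j 1 \<in> verts G" using assms(1,2) G_verts by auto
  ultimately show ?thesis using Gi_disj Gi_disj_G assms by blast
qed

lemma edge_at_private_vertex:
  assumes i: "i \<in> {1..n}" and z: "z \<in> verts (Gs i) - {x i 1}" and e: "e \<in> edges H" "z \<in> e"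
  shows "e \<in> edges (Gs i)"
proof -
  have "z \<notin> verts G" using Gi_disj_G i z by blast
  then have "e \<notin> edges G" using wf_graph_G e(2) by (auto simp: wf_graph_def)
  then obtain k where k: "k \<in> {1..n}" "e \<in> edges (Gs k)" using e(1) by (auto simp: edges_H)
  then have "z \<in> verts (Gs k)" using wf_graph_Gs e(2) by (auto simp: wf_graph_def)
  then have "k = i" using blocks_disjoint[OF i k(1)] z by blast
  then show ?thesis using k by simp
qed

lemma Gs_eq_induced:
  assumes i: "i \<in> {1..n}"
  shows "Gs i = induced H (verts (Gs i))"
proof -
  have sub: "verts (Gs i) \<subseteq> verts H" using i by (auto simp: verts_H)
  have "e \<in> edges (Gs i)" if e: "e \<in> edges H" "e \<subseteq> verts (Gs i)" for e
  proof -
    obtain a b where "e = {a, b}" "a \<noteq> b" using wf_graph_edgeE[OF wf_graph_H e(1)] by metis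
    then obtain z where "z \<in> e" "z \<noteq> x i 1" by blast
    then show ?thesis using edge_at_private_vertex[OF i _ e(1)] e(2) by blast
  qed
  then have "edges (induced H (verts (Gs i))) = edges (Gs i)"
    using wf_graph_Gs[OF i] i by (auto simp: edges_induced[OF sub] wf_graph_def edges_H)
  moreover have "verts (induced H (verts (Gs i))) = verts (Gs i)" by (rule verts_induced[OF sub])
  ultimately show ?thesis by (simp add: verts_def edges_def prod_eq_iff)
qed

lemma separated_private_blocks:
  assumes i: "i \<in> {1..n}" and B: "B \<subseteq> {1..n}" "i \<notin> B"
  shows "separated H (verts (Gs i) - {x i 1}) (blocks B)"
  unfolding blocks_def
proof (rule separated_UN_right)
  fix k assume "k \<in> B"
  then have k: "k \<in> {1..n}" "k \<noteq> i" using B by auto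
  have "e \<inter> verts (Gs k) = {}" if "e \<in> edges H" "z \<in> e" "z \<in> verts (Gs i) - {x i 1}" for e z
  proof -
    have "e \<subseteq> verts (Gs i)"
      using edge_at_private_vertex[OF i that(3,1,2)] wf_graph_Gs[OF i] by (auto simp: wf_graph_def)
    then show ?thesis using blocks_disjoint[OF i k(1)] k(2) by blast
  qed
  then show "separated H (verts (Gs i) - {x i 1}) (verts (Gs k))"
    using blocks_disjoint[OF i k(1)] k(2) unfolding separated_def by blast
qed

lemma private_not_in_closed_nbhd:
  assumes i: "i \<in> {1..n}" and z: "z \<in> verts (Gs i) - {x i 1}" and w: "w \<notin> verts (Gs i)"
  shows "z \<notin> closed_nbhd H w"
proof
  assume "z \<in> closed_nbhd H w"
  moreover have "z \<noteq> w" using z w by blast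
  ultimately have "{w, z} \<in> edges H" by (auto simp: closed_nbhd_def nbhd_def)
  then have "{w, z} \<in> edges (Gs i)" using edge_at_private_vertex[OF i z] by blast
  then show False using wf_graph_Gs[OF i] w by (auto simp: wf_graph_def)
qed


lemma blocks_subset: "A \<subseteq> {1..n} \<Longrightarrow> blocks A \<subseteq> verts H"
  by (auto simp: blocks_def verts_H)

lemma induced_del_root:
  "i \<in> {1..n} \<Longrightarrow> induced H (verts (Gs i) - {x i 1}) = del_verts (Gs i) {x i 1}"
  by (metis Gs_eq_induced del_verts_induced)

lemma vertex_decomposable_del_root:
  "i \<in> {1..n} \<Longrightarrow> shedding_vertex (Gs i) (x i 1) \<Longrightarrow>
   vertex_decomposable (induced H (verts (Gs i) - {x i 1}))"
  unfolding induced_del_root shedding_vertex_def by blast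

lemma induced_del_closed_nbhd_root:
  assumes i: "i \<in> {1..n}"
  shows "induced H (verts (Gs i) - closed_nbhd H (x i 1))
       = del_verts (Gs i) (closed_nbhd (Gs i) (x i 1))"
proof -
  have "verts (Gs i) \<subseteq> verts H" using i by (auto simp: verts_H)
  then have "closed_nbhd (Gs i) (x i 1) = closed_nbhd H (x i 1) \<inter> verts (Gs i)"
    by (subst Gs_eq_induced[OF i]) (rule closed_nbhd_induced[OF _ root_in_block[OF i]])
  then show ?thesis
    by (subst (2) Gs_eq_induced[OF i]) (simp add: del_verts_induced Diff_Int)
qed

lemma shedding_cond_blocks:
  assumes A: "A \<subseteq> {1..n}" and j: "j \<in> A" and sc: "shedding_cond (Gs j) (x j 1)"
  shows "shedding_cond (induced H (blocks A)) (x j 1)"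
proof -
  have jI: "j \<in> {1..n}" using A j by blast
  have U: "blocks A \<subseteq> verts H" by (rule blocks_subset[OF A])
  have Gj: "verts (Gs j) \<subseteq> blocks A" using j by (auto simp: blocks_def)
  show ?thesis
  proof (rule shedding_cond_induced[OF wf_graph_induced[OF wf_graph_H]])
    show "verts (Gs j) \<subseteq> verts (induced H (blocks A))" using Gj U by (simp add: verts_induced)
    show "x j 1 \<in> verts (Gs j)" by (rule root_in_block[OF jI])
    show "\<forall>e\<in>edges (induced H (blocks A)). e \<inter> (verts (Gs j) - {x j 1}) \<noteq> {} \<longrightarrow> e \<subseteq> verts (Gs j)"
    proof (intro ballI impI)
      fix e assume e: "e \<in> edges (induced H (blocks A))" "e \<inter> (verts (Gs j) - {x j 1}) \<noteq> {}"
      then obtain z where "z \<in> e" "z \<in> verts (Gs j) - {x j 1}" by blast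
      moreover have "e \<in> edges H" using e(1) by (simp add: edges_induced[OF U])
      ultimately have "e \<in> edges (Gs j)" using edge_at_private_vertex[OF jI] by blast
      then show "e \<subseteq> verts (Gs j)" using wf_graph_Gs[OF jI] by (simp add: wf_graph_def)
    qed
    show "shedding_cond (induced (induced H (blocks A)) (verts (Gs j))) (x j 1)"
      using sc by (simp add: induced_induced[OF Gj] Gs_eq_induced[OF jI, symmetric])
  qed
qed

context
  fixes A :: "nat set" and j :: nat
  assumes sv: "\<forall>i\<in>{1..n}. shedding_vertex (Gs i) (x i 1)"
    and A: "A \<subseteq> {1..n}" and j: "j \<in> A"
    and IH: "\<And>B. B \<subset> A \<Longrightarrow> vertex_decomposable (induced H (blocks B))"
begin

lemma vertex_decomposable_blocks_del_root:
  "vertex_decomposable (induced H (blocks A - {x j 1}))"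
proof -
  have jI: "j \<in> {1..n}" using A j by blast
  have "verts (Gs j) \<inter> blocks (A - {j}) = {}"
    using blocks_disjoint[OF jI] A unfolding blocks_def by blast
  then have "blocks A - {x j 1} = (verts (Gs j) - {x j 1}) \<union> blocks (A - {j})"
    using j root_in_block[OF jI] unfolding blocks_def by blast
  also have "vertex_decomposable (induced H \<dots>)"
  proof (rule vertex_decomposable_induced_Un[OF wf_graph_H])
    show "verts (Gs j) - {x j 1} \<subseteq> verts H" "blocks (A - {j}) \<subseteq> verts H"
      using jI A by (auto simp: verts_H blocks_def)
    show "separated H (verts (Gs j) - {x j 1}) (blocks (A - {j}))"
      by (rule separated_private_blocks[OF jI]) (use A in auto)
    show "vertex_decomposable (induced H (verts (Gs j) - {x j 1}))"
      using sv jI by (blast intro: vertex_decomposable_del_root)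
    show "vertex_decomposable (induced H (blocks (A - {j})))"
      by (rule IH) (use j in blast)
  qed
  finally show ?thesis .
qed

lemma vertex_decomposable_blocks_del_closed_nbhd:
  "vertex_decomposable (induced H (blocks A - closed_nbhd H (x j 1)))"
proof -
  define N where "N = closed_nbhd H (x j 1)"
  define K where "K = {k \<in> A - {j}. x k 1 \<in> N}"
  \<comment> \<open>the blocks of K lose exactly their root, the other blocks of A - {j} are untouched\<close>
  define Q where "Q k = verts (Gs k) - {x k 1}" for k
  have jI: "j \<in> {1..n}" using A j by blast
  have A0: "A - {j} \<subseteq> {1..n}" "j \<notin> A - {j}" using A by auto
  have KI: "K \<subseteq> {1..n}" "j \<notin> K" using A by (auto simp: K_def)
  have Q_N: "Q k \<inter> N = {}" if k: "k \<in> A - {j}" for k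
  proof -
    have "x j 1 \<notin> verts (Gs k)"
      using blocks_disjoint[OF jI, of k] root_in_block[OF jI] k A by blast
    then show ?thesis
      using private_not_in_closed_nbhd[of k _ "x j 1"] k A unfolding Q_def N_def by blast
  qed
  have "(\<Union>k\<in>A - {j}. verts (Gs k) - N) = (\<Union>k\<in>A - {j}. if k \<in> K then Q k else verts (Gs k))"
    using Q_N by (intro SUP_cong refl) (auto simp: K_def Q_def)
  also have "\<dots> = blocks (A - {j} - K) \<union> (\<Union>k\<in>K. Q k)"
    by (auto simp: blocks_def K_def)
  finally have "blocks A - N = (verts (Gs j) - N) \<union> (blocks (A - {j} - K) \<union> (\<Union>k\<in>K. Q k))"
    using j by (auto simp: blocks_def)
  also have "vertex_decomposable (induced H \<dots>)"
  proof (rule vertex_decomposable_induced_Un[OF wf_graph_H])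
    have sub: "blocks (A - {j} - K) \<union> (\<Union>k\<in>K. Q k) \<subseteq> blocks (A - {j})"
      by (auto simp: blocks_def K_def Q_def)
    show "separated H (verts (Gs j) - N) (blocks (A - {j} - K) \<union> (\<Union>k\<in>K. Q k))"
      by (rule separated_mono[OF separated_private_blocks[OF jI A0]])
        (use sub in \<open>auto simp: N_def closed_nbhd_def\<close>)
    show "vertex_decomposable (induced H (verts (Gs j) - N))"
      using sv jI unfolding N_def induced_del_closed_nbhd_root[OF jI] shedding_vertex_def by blast
    have "separated H (\<Union>k\<in>K. Q k) (blocks (A - {j} - K))"
      using KI A unfolding Q_def by (intro separated_UN_left separated_private_blocks) auto
    moreover have "vertex_decomposable (induced H (\<Union>k\<in>K. Q k))"
    proof (rule vertex_decomposable_induced_UN[OF _ wf_graph_H])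
      show "finite K" using KI(1) finite_subset by blast
      show "\<forall>k\<in>K. Q k \<subseteq> verts H" using KI by (auto simp: Q_def verts_H)
      show "\<forall>k\<in>K. vertex_decomposable (induced H (Q k))"
        using sv KI(1) unfolding Q_def by (blast intro: vertex_decomposable_del_root)
      show "\<forall>k\<in>K. \<forall>k'\<in>K. k \<noteq> k' \<longrightarrow> separated H (Q k) (Q k')"
      proof (intro ballI impI)
        fix k k' assume "k \<in> K" "k' \<in> K" "k \<noteq> k'"
        then have "separated H (Q k) (blocks {k'})"
          using KI unfolding Q_def by (intro separated_private_blocks) auto
        then show "separated H (Q k) (Q k')" by (rule separated_mono) (auto simp: blocks_def Q_def)
      qed
    qed
    moreover have "vertex_decomposable (induced H (blocks (A - {j} - K)))"
      by (rule IH) (use j in blast)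
    moreover have "blocks (A - {j} - K) \<subseteq> verts H" "(\<Union>k\<in>K. Q k) \<subseteq> verts H"
      using KI A by (auto simp: blocks_def Q_def verts_H)
    ultimately show "vertex_decomposable (induced H (blocks (A - {j} - K) \<union> (\<Union>k\<in>K. Q k)))"
      by (intro vertex_decomposable_induced_Un[OF wf_graph_H]) (simp_all add: separated_commute)
    show "verts (Gs j) - N \<subseteq> verts H"
      "blocks (A - {j} - K) \<union> (\<Union>k\<in>K. Q k) \<subseteq> verts H"
      using jI A KI by (auto simp: blocks_def Q_def verts_H)
  qed
  finally show ?thesis unfolding N_def .
qed

end

lemma vertex_decomposable_blocks:
  assumes sv: "\<forall>i\<in>{1..n}. shedding_vertex (Gs i) (x i 1)" and "A \<subseteq> {1..n}"
  shows "vertex_decomposable (induced H (blocks A))"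
proof -
  have "finite A" using assms(2) finite_subset by blast
  then show ?thesis using assms(2)
  proof (induction A rule: finite_psubset_induct)
    case (psubset A)
    show ?case
    proof (cases "A = {}")
      case True
      then show ?thesis using vertex_decomposable_induced_empty[OF wf_graph_H] by (simp add: blocks_def)
    next
      case False
      then obtain j where j: "j \<in> A" by blast
      then have jI: "j \<in> {1..n}" using psubset.prems by blast
      have IH: "\<And>B. B \<subset> A \<Longrightarrow> vertex_decomposable (induced H (blocks B))"
        using psubset by blast
      show ?thesis
      proof (rule vertex_decomposable_induced_shed[OF blocks_subset[OF psubset.prems]])
        show "x j 1 \<in> blocks A" using j root_in_block[OF jI] by (auto simp: blocks_def)
        show "shedding_cond (induced H (blocks A)) (x j 1)"
          using sv jI by (intro shedding_cond_blocks[OF psubset.prems j]) (simp add: shedding_vertex_def)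
      qed (rule vertex_decomposable_blocks_del_closed_nbhd vertex_decomposable_blocks_del_root;
           fact sv psubset.prems j IH)+
    qed
  qed
qed

theorem vertex_decomposable_attach:
  "\<forall>i\<in>{1..n}. shedding_vertex (Gs i) (x i 1) \<Longrightarrow> vertex_decomposable H"
  using vertex_decomposable_blocks[of "{1..n}"]
  unfolding verts_H_eq_blocks[symmetric] induced_verts[OF wf_graph_H] by blast

lemma exists_private_nbr:
  assumes i: "i \<in> {1..n}"
  obtains y where "y \<in> verts (Gs i) - {x i 1}" "{x i 1, y} \<in> edges (Gs i)"
proof -
  have "m i \<ge> 2" using m_ge i by blast
  then have in_range: "1 \<in> {1..m i}" "2 \<in> {1..m i}" by auto
  have "x i 1 \<noteq> x i 2"
  proof
    assume "x i 1 = x i 2"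
    then have "(1::nat) = 2" using inj_onD[OF bspec[OF Gi_verts_distinct i]] in_range by blast
    then show False by simp
  qed
  moreover have "x i 2 \<in> verts (Gs i)" using Gi_verts i in_range(2) by blast
  ultimately have x2: "x i 2 \<in> verts (Gs i)" "x i 1 \<noteq> x i 2" by blast+
  then have "(adj (Gs i))\<^sup>*\<^sup>* (x i 1) (x i 2)"
    using Gi_conn i root_in_block[OF i] unfolding connected_graph_def by blast
  then obtain y where "adj (Gs i) (x i 1) y"
    using x2(2) by (cases rule: converse_rtranclpE) auto
  then have e: "{x i 1, y} \<in> edges (Gs i)" by (simp add: adj_def)
  then have "y \<in> verts (Gs i) - {x i 1}" using wf_graph_Gs[OF i] by (auto simp: wf_graph_def)
  with e show thesis using that by blast
qed

lemma edge_leaving_block: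
  assumes i: "i \<in> {1..n}" and e: "e \<in> edges H" "e \<inter> verts (Gs i) \<noteq> {}" "\<not> e \<subseteq> verts (Gs i)"
  obtains k where "k \<in> {1..n}" "k \<noteq> i" "x k 1 \<in> e"
proof -
  consider "e \<in> edges G" | k where "k \<in> {1..n}" "e \<in> edges (Gs k)"
    using e(1) by (auto simp: edges_H)
  then show thesis
  proof cases
    case 1
    obtain z where z: "z \<in> e" "z \<notin> verts (Gs i)" using e(3) by blast
    then have "z \<in> verts G" using 1 wf_graph_G by (auto simp: wf_graph_def)
    then obtain k where "k \<in> {1..n}" "z = x k 1" by (auto simp: G_verts)
    moreover have "k \<noteq> i" using z root_in_block[OF i] calculation(2) by blast
    ultimately show thesis using that z(1) by blast
  next
    case 2
    then have "e \<subseteq> verts (Gs k)" using wf_graph_Gs by (auto simp: wf_graph_def)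
    then show thesis using blocks_disjoint[OF i 2(1)] e(2,3) by (cases "k = i") auto
  qed
qed

lemma closed_nbhd_private_subset:
  assumes i: "i \<in> {1..n}" and y: "y \<in> verts (Gs i) - {x i 1}"
  shows "closed_nbhd H y \<subseteq> verts (Gs i)"
proof
  fix w assume w: "w \<in> closed_nbhd H y"
  have yH: "y \<in> verts H" using y i by (auto simp: verts_H)
  show "w \<in> verts (Gs i)"
  proof (rule ccontr)
    assume "w \<notin> verts (Gs i)"
    then have "y \<notin> closed_nbhd H w" by (rule private_not_in_closed_nbhd[OF i y])
    moreover have "w \<in> verts H" using closed_nbhd_subset[OF yH] w by blast
    ultimately show False using w mem_closed_nbhd_commute[OF yH] by blast
  qed
qed

theorem vertex_decomposable_block:
  assumes vd: "vertex_decomposable H" and i: "i \<in> {1..n}"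
  shows "vertex_decomposable (Gs i)"
proof -
  have "\<forall>j\<in>{1..n}. \<exists>y. y \<in> verts (Gs j) - {x j 1} \<and> {x j 1, y} \<in> edges (Gs j)"
    using exists_private_nbr by blast
  then obtain y where y: "\<And>j. j \<in> {1..n} \<Longrightarrow> y j \<in> verts (Gs j) - {x j 1} \<and> {x j 1, y j} \<in> edges (Gs j)"
    by metis
  have N_y: "closed_nbhd H (y j) \<subseteq> verts (Gs j)" "x j 1 \<in> closed_nbhd H (y j)" if j: "j \<in> {1..n}" for j
  proof -
    show "closed_nbhd H (y j) \<subseteq> verts (Gs j)" using closed_nbhd_private_subset[OF j] y[OF j] by blast
    have "{y j, x j 1} \<in> edges H" using y[OF j] j by (auto simp: edges_H insert_commute)
    then show "x j 1 \<in> closed_nbhd H (y j)" using root_in_block[OF j] j by (auto simp: closed_nbhd_def nbhd_def verts_H)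
  qed
  define J where "J = {1..n} - {i}"
  define W where "W = (\<Union>s\<in>y ` J. closed_nbhd H s)"
  define L where "L = del_verts H W"
  have yJ: "y ` J \<subseteq> verts H" using y unfolding J_def verts_H by blast
  have "independent H (y ` J)"
    unfolding independent_def
  proof (intro conjI ballI notI)
    fix e assume e: "e \<in> edges H" "e \<subseteq> y ` J"
    obtain a b where ab: "e = {a, b}" "a \<noteq> b" using wf_graph_edgeE[OF wf_graph_H e(1)] by metis
    then obtain j k where jk: "j \<in> J" "k \<in> J" "a = y j" "b = y k" using e(2) by blast
    then have "y k \<in> closed_nbhd H (y j)" using e(1) ab yJ by (auto simp: closed_nbhd_def nbhd_def)
    then have "y k \<in> verts (Gs j)" using N_y(1)[of j] jk(1) by (auto simp: J_def)
    moreover have "y k \<in> verts (Gs k)" "j \<noteq> k" using y[of k] jk ab(2) by (auto simp: J_def)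
    ultimately show False using blocks_disjoint[of j k] jk(1,2) by (auto simp: J_def)
  qed (rule yJ)
  then have vd_L: "vertex_decomposable L"
    unfolding L_def W_def using vd by (intro vertex_decomposable_del_closed_nbhds wf_graph_H) (auto simp: J_def)
  have W_Gi: "W \<inter> verts (Gs i) = {}"
    using N_y(1) blocks_disjoint[OF i] by (fastforce simp: W_def J_def)
  then have Gi_L: "verts (Gs i) \<subseteq> verts L" using i by (auto simp: L_def verts_H)
  have sep: "separated L (verts (Gs i)) (verts L - verts (Gs i))"
    unfolding separated_def
  proof (intro conjI ballI)
    fix e assume e: "e \<in> edges L"
    show "e \<inter> verts (Gs i) = {} \<or> e \<inter> (verts L - verts (Gs i)) = {}"
    proof (rule ccontr)
      assume "\<not> ?thesis"
      then obtain k where k: "k \<in> {1..n}" "k \<noteq> i" "x k 1 \<in> e"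
        using e edge_leaving_block[OF i] by (auto simp: L_def)
      then have "x k 1 \<in> W" using N_y(2)[OF k(1)] by (auto simp: W_def J_def)
      then show False using e k(3) by (auto simp: L_def)
    qed
  qed blast
  have "wf_graph L" "finite (verts L)"
    using wf_graph_del_verts[OF wf_graph_H] finite_verts_H by (simp_all add: L_def)
  then have "vertex_decomposable (induced L (verts (Gs i)))"
    by (rule vertex_decomposable_induced_component[OF _ _ vd_L Gi_L sep])
  also have "induced L (verts (Gs i)) = induced H (verts (Gs i))"
    unfolding L_def induced_def del_verts_del_verts using W_Gi by (intro del_verts_cong) auto
  also have "\<dots> = Gs i" by (rule Gs_eq_induced[OF i, symmetric])
  finally show ?thesis .
qed

end

theorem proposition2p3:
  fixes G :: "'a graph" and Gs :: "nat \<Rightarrow> 'a graph"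
    and n :: nat and m :: "nat \<Rightarrow> nat" and x :: "nat \<Rightarrow> nat \<Rightarrow> 'a"
  assumes G_simple: "simple_graph G"
    and G_verts: "verts G = (\<lambda>i. x i 1) ` {1..n}"
    and G_verts_distinct: "inj_on (\<lambda>i. x i 1) {1..n}"
    and m_ge: "\<forall>i\<in>{1..n}. m i \<ge> 2"
    and Gi_simple: "\<forall>i\<in>{1..n}. simple_graph (Gs i)"
    and Gi_conn: "\<forall>i\<in>{1..n}. connected_graph (Gs i)"
    and Gi_verts: "\<forall>i\<in>{1..n}. verts (Gs i) = x i ` {1..m i}"
    and Gi_verts_distinct: "\<forall>i\<in>{1..n}. inj_on (x i) {1..m i}"
    and Gi_disj: "\<forall>i\<in>{1..n}. \<forall>j\<in>{1..n}. i \<noteq> j \<longrightarrow>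
                    (verts (Gs i) - {x i 1}) \<inter> (verts (Gs j) - {x j 1}) = {}"
    and Gi_disj_G: "\<forall>i\<in>{1..n}. (verts (Gs i) - {x i 1}) \<inter> verts G = {}"
  shows "((\<forall>i\<in>{1..n}. vertex_decomposable (Gs i) \<and> shedding_vertex (Gs i) (x i 1))
            \<longrightarrow> vertex_decomposable (attach G n Gs))
       \<and> (vertex_decomposable (attach G n Gs)
            \<longrightarrow> (\<forall>i\<in>{1..n}. vertex_decomposable (Gs i)))"
proof -
  interpret attachment G Gs n m x using assms by unfold_locales
  show ?thesis using vertex_decomposable_attach vertex_decomposable_block by blast
qed

end
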